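(* Let $Y$ be a well-tempered stratified set and $X$ any stratified set. Then every stratified map $h:X\circledast\Delta[1]_t\to Y$ factors through the projection $\pi_X:X\circledast\Delta[1]_t\to X$, i.e. there is a stratified map $\hat h:X\to Y$ with $h=\hat h\circ\pi_X$.
   Context: $[n]=\{0<\dots<n\}$; simplicial operators are order-preserving maps; $\sigma_k:[n+1]\to[n]$ is the degeneracy operator hitting $k$ twice. A stratified set is a simplicial set with a set of thin simplices containing every degenerate simplex and no $0$-simplex; stratified maps preserve thinness. $\Delta[1]_t$ is the standard $1$-simplex with all simplices of positive dimension thin. $X\circledast Y$ is the product: $n$-simplices are pairs $(x,y)$, operators act componentwise, thin iff both components thin; $\pi_X$ is the first projection. An $n$-simplex $x$ of a stratified set is pre-degenerate at $k$ ($0\le k<n$) if $x\cdot\alpha$ is thin for every operator $\alpha:[m]\to[n]$ whose image contains $k$ and $k+1$; $x$ is degenerate at $k$ if $x=x'\cdot\sigma_k$ for some simplex $x'$. A stratified set is well-tempered if every simplex pre-degenerate at $k$ is degenerate at $k$. *)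

theory Defs
  imports "HOL-Library.FuncSet"
begin

text \<open>Simplicial operators [m] -> [n]: order-preserving maps, represented
  extensionally as functions on {..m} (value undefined outside).\<close>

definition is_op :: "nat \<Rightarrow> nat \<Rightarrow> (nat \<Rightarrow> nat) \<Rightarrow> bool" where
  "is_op m n \<alpha> \<longleftrightarrow> \<alpha> \<in> {..m} \<rightarrow>\<^sub>E {..n} \<and> mono_on {..m} \<alpha>"

definition op_comp :: "nat \<Rightarrow> (nat \<Rightarrow> nat) \<Rightarrow> (nat \<Rightarrow> nat) \<Rightarrow> (nat \<Rightarrow> nat)" where
  "op_comp k \<alpha> \<beta> = restrict (\<alpha> \<circ> \<beta>) {..k}"

definition op_id :: "nat \<Rightarrow> (nat \<Rightarrow> nat)" where
  "op_id n = restrict id {..n}"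

definition sigma :: "nat \<Rightarrow> nat \<Rightarrow> (nat \<Rightarrow> nat)" where
  "sigma n k = restrict (\<lambda>i. if i \<le> k then i else i - 1) {..Suc n}"

text \<open>A stratified set: n-simplices, action  act n m \<alpha> x = x\<cdot>\<alpha>  for
  x an n-simplex and \<alpha> : [m] -> [n], and thin n-simplices.\<close>
record 'a sset =
  simp :: "nat \<Rightarrow> 'a set"
  act  :: "nat \<Rightarrow> nat \<Rightarrow> (nat \<Rightarrow> nat) \<Rightarrow> 'a \<Rightarrow> 'a"
  thin :: "nat \<Rightarrow> 'a set"

definition simplicial_set :: "'a sset \<Rightarrow> bool" where
  "simplicial_set X \<longleftrightarrow>
     (\<forall>n m \<alpha> x. is_op m n \<alpha> \<and> x \<in> simp X n \<longrightarrow> act X n m \<alpha> x \<in> simp X m) \<and>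
     (\<forall>n x. x \<in> simp X n \<longrightarrow> act X n n (op_id n) x = x) \<and>
     (\<forall>n m k \<alpha> \<beta> x. is_op m n \<alpha> \<and> is_op k m \<beta> \<and> x \<in> simp X n \<longrightarrow>
        act X n k (op_comp k \<alpha> \<beta>) x = act X m k \<beta> (act X n m \<alpha> x))"

definition degenerate_at :: "'a sset \<Rightarrow> nat \<Rightarrow> nat \<Rightarrow> 'a \<Rightarrow> bool" where
  "degenerate_at X n k x \<longleftrightarrow> k < n \<and>
     (\<exists>x' \<in> simp X (n - 1). x = act X (n - 1) n (sigma (n - 1) k) x')"

definition degenerate :: "'a sset \<Rightarrow> nat \<Rightarrow> 'a \<Rightarrow> bool" where
  "degenerate X n x \<longleftrightarrow> (\<exists>k<n. degenerate_at X n k x)"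

definition stratified_set :: "'a sset \<Rightarrow> bool" where
  "stratified_set X \<longleftrightarrow> simplicial_set X \<and>
     (\<forall>n. thin X n \<subseteq> simp X n) \<and>
     (\<forall>n x. x \<in> simp X n \<and> degenerate X n x \<longrightarrow> x \<in> thin X n) \<and>
     thin X 0 = {}"

definition stratified_map :: "'a sset \<Rightarrow> 'b sset \<Rightarrow> (nat \<Rightarrow> 'a \<Rightarrow> 'b) \<Rightarrow> bool" where
  "stratified_map X Y f \<longleftrightarrow>
     (\<forall>n x. x \<in> simp X n \<longrightarrow> f n x \<in> simp Y n) \<and>
     (\<forall>n m \<alpha> x. is_op m n \<alpha> \<and> x \<in> simp X n \<longrightarrow>
        f m (act X n m \<alpha> x) = act Y n m \<alpha> (f n x)) \<and>
     (\<forall>n x. x \<in> thin X n \<longrightarrow> f n x \<in> thin Y n)"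

definition pre_degenerate_at :: "'a sset \<Rightarrow> nat \<Rightarrow> nat \<Rightarrow> 'a \<Rightarrow> bool" where
  "pre_degenerate_at X n k x \<longleftrightarrow> k < n \<and>
     (\<forall>m \<alpha>. is_op m n \<alpha> \<and> k \<in> \<alpha> ` {..m} \<and> Suc k \<in> \<alpha> ` {..m} \<longrightarrow>
        act X n m \<alpha> x \<in> thin X m)"

definition well_tempered :: "'a sset \<Rightarrow> bool" where
  "well_tempered X \<longleftrightarrow>
     (\<forall>n k x. x \<in> simp X n \<and> pre_degenerate_at X n k x \<longrightarrow> degenerate_at X n k x)"

definition Delta1t :: "(nat \<Rightarrow> nat) sset" where
  "Delta1t = \<lparr> simp = (\<lambda>n. {x. is_op n 1 x}),
               act = (\<lambda>n m \<alpha> x. op_comp m x \<alpha>),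
               thin = (\<lambda>n. if n > 0 then {x. is_op n 1 x} else {}) \<rparr>"

definition sprod :: "'a sset \<Rightarrow> 'b sset \<Rightarrow> ('a \<times> 'b) sset" where
  "sprod X Y = \<lparr> simp = (\<lambda>n. simp X n \<times> simp Y n),
                 act = (\<lambda>n m \<alpha> p. (act X n m \<alpha> (fst p), act Y n m \<alpha> (snd p))),
                 thin = (\<lambda>n. thin X n \<times> thin Y n) \<rparr>"

end

theory Submission
  imports Defs
begin

text \<open>Every n-simplex of \<open>\<Delta>[1]\<close> is a step function \<open>step_op n k\<close>, sending i < k to 0
  and i \<ge> k to 1 (k \<le> n+1). For an n-simplex x of X and k \<le> n, h maps the (n+1)-simplex
  \<open>(x\<cdot>\<sigma>\<^sub>k, step_op (n+1) (k+1))\<close> to a simplex that is pre-degenerate at k: an operator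
  whose image contains k and k+1 makes \<open>x\<cdot>\<sigma>\<^sub>k\<cdot>\<alpha>\<close> degenerate, hence thin, and the
  \<open>\<Delta>[1]\<close>-component is thin in positive dimension. By well-temperedness that image is
  \<open>y\<cdot>\<sigma>\<^sub>k\<close>, so its k-th and (k+1)-st faces both equal y; but these faces are
  \<open>h (x, step_op n k)\<close> and \<open>h (x, step_op n (k+1))\<close>. Hence h ignores the
  \<open>\<Delta>[1]\<close>-component, and its restriction to the vertex 0 (the step function
  \<open>step_op n (n+1)\<close>) is the factorisation.\<close>

definition delta :: "nat \<Rightarrow> nat \<Rightarrow> (nat \<Rightarrow> nat)" where
  "delta n k = restrict (\<lambda>i. if i < k then i else Suc i) {..n}"

definition step_op :: "nat \<Rightarrow> nat \<Rightarrow> (nat \<Rightarrow> nat)" where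
  "step_op n k = restrict (\<lambda>i. if i < k then 0 else 1) {..n}"

lemma is_op_op_comp: "is_op m n \<alpha> \<Longrightarrow> is_op k m \<beta> \<Longrightarrow> is_op k n (op_comp k \<alpha> \<beta>)"
  unfolding is_op_def op_comp_def mono_on_def by (auto simp: PiE_def Pi_def)

lemma is_op_sigma: "k \<le> n \<Longrightarrow> is_op (Suc n) n (sigma n k)"
  unfolding is_op_def sigma_def mono_on_def by (auto simp: PiE_def Pi_def)

lemma is_op_delta: "is_op n (Suc n) (delta n k)"
  unfolding is_op_def delta_def mono_on_def by (auto simp: PiE_def Pi_def)

lemma is_op_step_op: "is_op n 1 (step_op n k)"
  unfolding is_op_def step_op_def mono_on_def by (auto simp: PiE_def Pi_def)

lemma sigma_delta_same: "op_comp n (sigma n k) (delta n k) = op_id n"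
  by (rule ext) (auto simp: op_comp_def sigma_def delta_def op_id_def)

lemma sigma_delta_Suc: "op_comp n (sigma n k) (delta n (Suc k)) = op_id n"
  by (rule ext) (auto simp: op_comp_def sigma_def delta_def op_id_def)

lemma step_op_delta_same: "op_comp n (step_op (Suc n) (Suc k)) (delta n k) = step_op n k"
  by (rule ext) (auto simp: op_comp_def step_op_def delta_def)

lemma step_op_delta_Suc: "op_comp n (step_op (Suc n) (Suc k)) (delta n (Suc k)) = step_op n (Suc k)"
  by (rule ext) (auto simp: op_comp_def step_op_def delta_def)

lemma step_op_last_op_comp:
  "is_op m n \<alpha> \<Longrightarrow> op_comp m (step_op n (Suc n)) \<alpha> = step_op m (Suc m)"
  by (rule ext) (auto simp: op_comp_def step_op_def is_op_def PiE_def Pi_def)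

lemma op_into_1_is_step_op:
  assumes "is_op n 1 t"
  obtains k where "k \<le> Suc n" and "t = step_op n k"
proof
  define k where "k = (LEAST i. n < i \<or> t i = 1)"
  have t_le_1: "t i \<le> 1" if "i \<le> n" for i
    using assms that unfolding is_op_def by auto
  have k_switch: "n < k \<or> t k = 1"
    unfolding k_def by (rule LeastI[of _ "Suc n"]) simp
  have below_k: "i \<le> n \<and> t i \<noteq> 1" if "i < k" for i
    using not_less_Least[OF that[unfolded k_def]] by simp
  show "k \<le> Suc n"
    unfolding k_def by (rule Least_le) simp
  show "t = step_op n k"
  proof
    fix i
    show "t i = step_op n k i"
    proof (cases "i \<le> n")
      case True
      show ?thesis
      proof (cases "i < k")
        case True
        then show ?thesis using below_k t_le_1 by (force simp: step_op_def)
      next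
        case False
        then have "k \<le> i" and "t k = 1" using True k_switch by auto
        then have "1 \<le> t i"
          using assms True mono_onD[of "{..n}" t k i] unfolding is_op_def by auto
        then show ?thesis using False True t_le_1[OF True] by (auto simp: step_op_def)
      qed
    next
      case False
      then show ?thesis using assms unfolding is_op_def step_op_def by (auto simp: PiE_def extensional_def)
    qed
  qed
qed

lemma op_hits_consecutive:
  assumes op: "is_op m n \<alpha>" and a: "a \<le> m" "\<alpha> a = k"
    and b: "b \<le> m" "\<alpha> b = Suc k"
  shows "\<exists>j<m. \<alpha> j = k \<and> \<alpha> (Suc j) = Suc k"
  using b
proof (induction b)
  case 0
  then show ?case using op a mono_onD[of "{..m}" \<alpha> 0 a] unfolding is_op_def by auto
next
  case (Suc b)
  have mono: "mono_on {..m} \<alpha>" using op unfolding is_op_def by auto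
  show ?case
  proof (cases "\<alpha> b = k")
    case True
    then show ?thesis using Suc.prems by (intro exI[of _ b]) auto
  next
    case False
    have "a \<le> b" using a Suc.prems mono_onD[OF mono, of "Suc b" a] by (cases "a \<le> b") auto
    then have "k \<le> \<alpha> b" and "\<alpha> b \<le> Suc k"
      using a Suc.prems mono_onD[OF mono, of a b] mono_onD[OF mono, of b "Suc b"] by auto
    with False have "\<alpha> b = Suc k" by auto
    then show ?thesis using Suc by auto
  qed
qed

lemma op_factor_sigma:
  assumes op: "is_op (Suc m) n \<beta>" and j: "j \<le> m" and eq: "\<beta> j = \<beta> (Suc j)"
  shows "op_comp (Suc m) (op_comp m \<beta> (delta m (Suc j))) (sigma m j) = \<beta>"
proof
  fix i
  show "op_comp (Suc m) (op_comp m \<beta> (delta m (Suc j))) (sigma m j) i = \<beta> i"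
  proof (cases "i \<le> Suc m")
    case True
    then consider "i \<le> j" | "i = Suc j" | "Suc j < i" by linarith
    then show ?thesis
      using True j eq by cases (auto simp: op_comp_def sigma_def delta_def)
  next
    case False
    then show ?thesis using op unfolding is_op_def op_comp_def by (auto simp: PiE_def extensional_def)
  qed
qed

locale simplicial =
  fixes X :: "'a sset"
  assumes simplicial_set: "simplicial_set X"
begin

lemma act_closed: "is_op m n \<alpha> \<Longrightarrow> x \<in> simp X n \<Longrightarrow> act X n m \<alpha> x \<in> simp X m"
  using simplicial_set unfolding simplicial_set_def by blast

lemma act_id: "x \<in> simp X n \<Longrightarrow> act X n n (op_id n) x = x"
  using simplicial_set unfolding simplicial_set_def by blast

lemma act_op_comp: "is_op m n \<alpha> \<Longrightarrow> is_op k m \<beta> \<Longrightarrow> x \<in> simp X n \<Longrightarrow>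
    act X n k (op_comp k \<alpha> \<beta>) x = act X m k \<beta> (act X n m \<alpha> x)"
  using simplicial_set unfolding simplicial_set_def by blast

lemma degenerate_at_act_noninj:
  assumes op: "is_op m n \<beta>" and j: "j < m" and eq: "\<beta> j = \<beta> (Suc j)" and x: "x \<in> simp X n"
  shows "degenerate_at X m j (act X n m \<beta> x)"
proof -
  obtain m' where m: "m = Suc m'" using j by (cases m) auto
  define \<beta>' where "\<beta>' = op_comp m' \<beta> (delta m' (Suc j))"
  have op': "is_op m' n \<beta>'"
    unfolding \<beta>'_def using is_op_op_comp[OF op[unfolded m] is_op_delta] .
  have "j \<le> m'" using j m by auto
  then have "act X n m \<beta> x = act X m' m (sigma m' j) (act X n m' \<beta>' x)"
    using act_op_comp[OF op' is_op_sigma x, of j] op_factor_sigma[OF op[unfolded m] _ eq] m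
    by (simp add: \<beta>'_def)
  then show ?thesis
    unfolding degenerate_at_def using j m act_closed[OF op' x] by auto
qed

end

locale stratified =
  fixes X :: "'a sset"
  assumes stratified_set: "stratified_set X"
begin

sublocale simplicial X
  using stratified_set unfolding stratified_set_def by unfold_locales blast

lemma thin_pos: "x \<in> thin X n \<Longrightarrow> 0 < n"
  using stratified_set unfolding stratified_set_def by (cases n) auto

lemma degenerate_at_thin: "x \<in> simp X n \<Longrightarrow> degenerate_at X n k x \<Longrightarrow> x \<in> thin X n"
  using stratified_set unfolding stratified_set_def degenerate_def degenerate_at_def by blast

lemma act_noninj_thin:
  "is_op m n \<beta> \<Longrightarrow> j < m \<Longrightarrow> \<beta> j = \<beta> (Suc j) \<Longrightarrow> x \<in> simp X n \<Longrightarrow>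
    act X n m \<beta> x \<in> thin X m"
  by (blast intro: degenerate_at_thin degenerate_at_act_noninj act_closed)

end

lemma simp_sprod_Delta1t [simp]: "simp (sprod X Delta1t) n = simp X n \<times> {t. is_op n 1 t}"
  by (simp add: sprod_def Delta1t_def)

lemma act_sprod_Delta1t [simp]:
  "act (sprod X Delta1t) n m \<alpha> p = (act X n m \<alpha> (fst p), op_comp m (snd p) \<alpha>)"
  by (simp add: sprod_def Delta1t_def)

lemma thin_sprod_Delta1t [simp]:
  "thin (sprod X Delta1t) n = thin X n \<times> (if 0 < n then {t. is_op n 1 t} else {})"
  by (simp add: sprod_def Delta1t_def)

locale cylinder_map = X: stratified X + Y: stratified Y
  for X :: "'a sset" and Y :: "'b sset" +
  fixes h :: "nat \<Rightarrow> 'a \<times> (nat \<Rightarrow> nat) \<Rightarrow> 'b"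
  assumes stratified_map: "stratified_map (sprod X Delta1t) Y h"
begin

lemma h_closed: "x \<in> simp X n \<Longrightarrow> is_op n 1 t \<Longrightarrow> h n (x, t) \<in> simp Y n"
  using stratified_map unfolding stratified_map_def by simp

lemma h_act: "is_op m n \<alpha> \<Longrightarrow> x \<in> simp X n \<Longrightarrow> is_op n 1 t \<Longrightarrow>
    h m (act X n m \<alpha> x, op_comp m t \<alpha>) = act Y n m \<alpha> (h n (x, t))"
  using stratified_map unfolding stratified_map_def by (metis act_sprod_Delta1t simp_sprod_Delta1t
      fst_conv snd_conv mem_Collect_eq mem_Sigma_iff)

lemma h_thin: "x \<in> thin X n \<Longrightarrow> is_op n 1 t \<Longrightarrow> h n (x, t) \<in> thin Y n"
  using stratified_map X.thin_pos unfolding stratified_map_def by simp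

lemma pre_degenerate_at_prism:
  assumes x: "x \<in> simp X n" and k: "k \<le> n"
  shows "pre_degenerate_at Y (Suc n) k
           (h (Suc n) (act X n (Suc n) (sigma n k) x, step_op (Suc n) (Suc k)))"
  unfolding pre_degenerate_at_def
proof (intro conjI allI impI)
  show "k < Suc n" using k by simp
  fix m \<alpha>
  assume "is_op m (Suc n) \<alpha> \<and> k \<in> \<alpha> ` {..m} \<and> Suc k \<in> \<alpha> ` {..m}"
  then have op: "is_op m (Suc n) \<alpha>" and "\<exists>j<m. \<alpha> j = k \<and> \<alpha> (Suc j) = Suc k"
    by (auto intro: op_hits_consecutive)
  then obtain j where j: "j < m" "\<alpha> j = k" "\<alpha> (Suc j) = Suc k" by blast
  have sigma_op: "is_op (Suc n) n (sigma n k)" using is_op_sigma k .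
  let ?\<beta> = "op_comp m (sigma n k) \<alpha>"
  have "?\<beta> j = ?\<beta> (Suc j)" using j k by (simp add: op_comp_def sigma_def)
  then have "act X n m ?\<beta> x \<in> thin X m"
    using X.act_noninj_thin is_op_op_comp[OF sigma_op op] j(1) x by blast
  then have "h m (act X n m ?\<beta> x, op_comp m (step_op (Suc n) (Suc k)) \<alpha>) \<in> thin Y m"
    using h_thin is_op_op_comp[OF is_op_step_op op] by blast
  then show "act Y (Suc n) m \<alpha>
      (h (Suc n) (act X n (Suc n) (sigma n k) x, step_op (Suc n) (Suc k))) \<in> thin Y m"
    using h_act[OF op X.act_closed[OF sigma_op x] is_op_step_op] X.act_op_comp[OF sigma_op op x]
    by simp
qed


lemma h_step_op_Suc:
  assumes wt: "well_tempered Y" and x: "x \<in> simp X n" and k: "k \<le> n"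
  shows "h n (x, step_op n k) = h n (x, step_op n (Suc k))"
proof -
  define xs where "xs = act X n (Suc n) (sigma n k) x"
  define \<tau> where "\<tau> = step_op (Suc n) (Suc k)"
  have sigma_op: "is_op (Suc n) n (sigma n k)" using is_op_sigma k .
  have xs: "xs \<in> simp X (Suc n)" unfolding xs_def using X.act_closed[OF sigma_op x] .
  have "h (Suc n) (xs, \<tau>) \<in> simp Y (Suc n)" using h_closed[OF xs is_op_step_op] by (simp add: \<tau>_def)
  moreover have "pre_degenerate_at Y (Suc n) k (h (Suc n) (xs, \<tau>))"
    unfolding xs_def \<tau>_def using pre_degenerate_at_prism[OF x k] .
  ultimately have "degenerate_at Y (Suc n) k (h (Suc n) (xs, \<tau>))"
    using wt unfolding well_tempered_def by blast
  then obtain y where y: "y \<in> simp Y n" "h (Suc n) (xs, \<tau>) = act Y n (Suc n) (sigma n k) y"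
    unfolding degenerate_at_def by auto
  have face: "h n (x, step_op n k') = y"
    if sigma_delta: "op_comp n (sigma n k) (delta n k') = op_id n"
      and step_delta: "op_comp n \<tau> (delta n k') = step_op n k'" for k'
  proof -
    have "h n (x, step_op n k') = h n (act X (Suc n) n (delta n k') xs, op_comp n \<tau> (delta n k'))"
      using X.act_op_comp[OF sigma_op is_op_delta[of n k'] x] X.act_id[OF x] sigma_delta step_delta
      by (simp add: xs_def)
    also have "\<dots> = act Y (Suc n) n (delta n k') (h (Suc n) (xs, \<tau>))"
      using h_act[OF is_op_delta xs] is_op_step_op by (simp add: \<tau>_def)
    also have "\<dots> = act Y n n (op_comp n (sigma n k) (delta n k')) y"
      using y Y.act_op_comp[OF sigma_op is_op_delta[of n k'] y(1)] by simp
    also have "\<dots> = y" using sigma_delta Y.act_id[OF y(1)] by simp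
    finally show ?thesis .
  qed
  show ?thesis
    using face[OF sigma_delta_same] face[OF sigma_delta_Suc]
    by (simp add: \<tau>_def step_op_delta_same step_op_delta_Suc)
qed

lemma h_step_op_last:
  assumes "well_tempered Y" and "x \<in> simp X n" and "k \<le> Suc n"
  shows "h n (x, step_op n k) = h n (x, step_op n (Suc n))"
  using assms(3)
proof (induction k rule: inc_induct)
  case (step k)
  then have "k \<le> n" by simp
  with step.IH show ?case using h_step_op_Suc[OF assms(1,2) \<open>k \<le> n\<close>] by simp
qed simp

definition base :: "nat \<Rightarrow> 'a \<Rightarrow> 'b" where
  "base n x = h n (x, step_op n (Suc n))"

lemma stratified_map_base: "stratified_map X Y base"
  unfolding stratified_map_def base_def
proof (intro conjI allI impI)
  fix n x
  assume "x \<in> simp X n"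
  then show "h n (x, step_op n (Suc n)) \<in> simp Y n" using h_closed is_op_step_op by blast
next
  fix n m \<alpha> x
  assume "is_op m n \<alpha> \<and> x \<in> simp X n"
  then have op: "is_op m n \<alpha>" and x: "x \<in> simp X n" by auto
  show "h m (act X n m \<alpha> x, step_op m (Suc m)) = act Y n m \<alpha> (h n (x, step_op n (Suc n)))"
    using h_act[OF op x is_op_step_op[of n "Suc n"]] step_op_last_op_comp[OF op] by simp
next
  fix n x
  assume "x \<in> thin X n"
  then show "h n (x, step_op n (Suc n)) \<in> thin Y n" using h_thin is_op_step_op by blast
qed

lemma h_eq_base:
  assumes "well_tempered Y" and "p \<in> simp (sprod X Delta1t) n"
  shows "h n p = base n (fst p)"
proof -
  obtain x t where p: "p = (x, t)" and x: "x \<in> simp X n" and t: "is_op n 1 t"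
    using assms(2) by auto
  obtain k where k: "k \<le> Suc n" and "t = step_op n k" using op_into_1_is_step_op[OF t] .
  then show ?thesis using h_step_op_last[OF assms(1) x k] p by (simp add: base_def)
qed

end

theorem mainTheorem11:
  fixes X :: "'a sset" and Y :: "'b sset"
    and h :: "nat \<Rightarrow> 'a \<times> (nat \<Rightarrow> nat) \<Rightarrow> 'b"
  assumes "stratified_set Y" and "well_tempered Y"
    and "stratified_set X"
    and "stratified_map (sprod X Delta1t) Y h"
  shows "\<exists>hh. stratified_map X Y hh \<and>
           (\<forall>n p. p \<in> simp (sprod X Delta1t) n \<longrightarrow> h n p = hh n (fst p))"
proof -
  interpret cylinder_map X Y h
    using assms(1,3,4) by (simp add: cylinder_map_def stratified_def cylinder_map_axioms_def)
  show ?thesis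
    using stratified_map_base h_eq_base[OF assms(2)] by blast
qed

end
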